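(* Let $p\ge1$, $X=\{0,1,\dots,p\}$, and $w=x_1x_2\cdots\in X^\infty\setminus\{0^\infty\}$; for $n\ge1$ let $w_n=x_1\cdots x_n$. Then $|\mathcal P^{w_n}_n|\le|\mathcal P^{w_{n+1}}_{n+1}|$ for every $n$ with $w_n\ne0^n$. Moreover $\lim_{n}|\mathcal P^{w_n}_n|<\infty$ if and only if $w$ is cofinal to a word in $\{0,i\}^\infty$ for some $i\in X$.
   Context: $\mathcal G_{S_p}$ is generated by $e_1,\dots,e_p$ acting on $X^\ast$ by $e_i(0w)=i\,e_i(w)$, $e_i(iw)=0w$, $e_i(jw)=jw$ for $j\notin\{0,i\}$. $\Gamma^p_n$ is the Schreier graph on $X^n$ with an edge labelled $e_j$ joining $v$ and $e_j(v)$ for all $v,j$. An $e_j$-cycle is the $\langle e_j\rangle$-orbit of a vertex with its $e_j$-labelled edges; $C_n^i$ is the $e_i$-cycle with vertex set $\{0,i\}^n$. Let $B_n$ be the bipartite graph whose vertices are the vertices of $\Gamma^p_n$ and the $e$-cycles of length $\ge2$, a vertex being joined to each such cycle containing it ($B_n$ is a tree). Removing $0^n$ from $\Gamma^p_n$ leaves $p$ components; the $i$-th petal contains $C_n^i\setminus\{0^n\}$. For $u\ne0^n$ in the $i$-th petal, the path of cycles $\mathcal P^u_n$ is the sequence of cycles met along the unique path in $B_n$ from $u$ to $C_n^i$, and $|\mathcal P^u_n|$ its number of cycles. Two infinite words are cofinal if they differ in only finitely many positions. *)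

theory Defs
  imports Complex_Main
begin

definition words :: "nat \<Rightarrow> nat \<Rightarrow> nat list set" where
  "words p n = {v. length v = n \<and> set v \<subseteq> {0..p}}"

fun gen :: "nat \<Rightarrow> nat list \<Rightarrow> nat list" where
  "gen i [] = []"
| "gen i (x # v) = (if x = 0 then i # gen i v else if x = i then 0 # v else x # v)"

definition Cset :: "nat \<Rightarrow> nat \<Rightarrow> nat list set" where
  "Cset n i = {v. length v = n \<and> set v \<subseteq> {0, i}}"

definition orbit :: "nat \<Rightarrow> nat list \<Rightarrow> nat list set" where
  "orbit j v = {u. (v, u) \<in> ({(a, b). b = gen j a} \<union> {(a, b). b = gen j a}\<inverse>)\<^sup>*}"

text \<open>An e_j-cycle of length at least 2 in the Schreier graph on X^n, identified by its
  label j and its vertex set.\<close>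
definition is_cycle :: "nat \<Rightarrow> nat \<Rightarrow> nat \<Rightarrow> nat list set \<Rightarrow> bool" where
  "is_cycle p n j S \<longleftrightarrow> j \<in> {1..p} \<and> (\<exists>v\<in>words p n. S = orbit j v) \<and> card S \<ge> 2"

datatype node = Vert "nat list" | Cyc nat "nat list set"

fun is_Cyc :: "node \<Rightarrow> bool" where
  "is_Cyc (Vert _) = False"
| "is_Cyc (Cyc _ _) = True"

definition Badj :: "nat \<Rightarrow> nat \<Rightarrow> node \<Rightarrow> node \<Rightarrow> bool" where
  "Badj p n a b \<longleftrightarrow> (\<exists>v j S. {a, b} = {Vert v, Cyc j S} \<and> v \<in> words p n \<and> is_cycle p n j S \<and> v \<in> S)"

definition Bpath :: "nat \<Rightarrow> nat \<Rightarrow> nat list \<Rightarrow> nat \<Rightarrow> node list \<Rightarrow> bool" where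
  "Bpath p n u i ps \<longleftrightarrow> ps \<noteq> [] \<and> hd ps = Vert u \<and> last ps = Cyc i (Cset n i) \<and>
     distinct ps \<and> successively (Badj p n) ps"

definition Gedge_no0 :: "nat \<Rightarrow> nat \<Rightarrow> (nat list \<times> nat list) set" where
  "Gedge_no0 p n = {(a, b). a \<in> words p n \<and> b \<in> words p n \<and>
      a \<noteq> replicate n 0 \<and> b \<noteq> replicate n 0 \<and>
      (\<exists>j\<in>{1..p}. b = gen j a \<or> a = gen j b)}"

definition in_petal :: "nat \<Rightarrow> nat \<Rightarrow> nat \<Rightarrow> nat list \<Rightarrow> bool" where
  "in_petal p n i u \<longleftrightarrow> i \<in> {1..p} \<and> u \<in> words p n \<and> u \<noteq> replicate n 0 \<and>
     (\<exists>v \<in> Cset n i - {replicate n 0}. (u, v) \<in> (Gedge_no0 p n)\<^sup>*)"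

definition petal_index :: "nat \<Rightarrow> nat \<Rightarrow> nat list \<Rightarrow> nat" where
  "petal_index p n u = (THE i. in_petal p n i u)"

text \<open>The number of cycles |P^u_n| in the path of cycles of u.\<close>
definition path_cycles :: "nat \<Rightarrow> nat \<Rightarrow> nat list \<Rightarrow> nat" where
  "path_cycles p n u = length (filter is_Cyc (THE ps. Bpath p n u (petal_index p n u) ps))"

definition pref :: "(nat \<Rightarrow> nat) \<Rightarrow> nat \<Rightarrow> nat list" where
  "pref w n = map w [0..<n]"

end

theory Submission
  imports Defs
begin

text \<open>
  For a word u other than 0^n, the number of cycles |P^u_n| equals the number of blocks of u,
  i.e. of maximal runs of equal letters once the zeros of u are deleted.

  The e_j-orbit of v consists of the words that agree with v after its longest prefix over
  {0, j}; replacing that prefix by zeros gives a canonical representative. Hence e_j-edges avoiding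
  0^n never change the last nonzero letter, so u lies in the petal of its last nonzero letter. Rooting
  B_n at C^i_n, every vertex hangs below the cycle labelled by its first nonzero letter and every
  other cycle below its representative; a path from u to the root can only follow these parent links,
  so it is unique. Clearing the first block of u moves one step up through the cycle of its first
  letter, which gives exactly one cycle per block.

  The number of blocks of the prefixes of w is monotone, and it is bounded exactly when, from some
  point on, all nonzero letters of w are equal.
\<close>

section \<open>Blocks of a word\<close>

fun nonzeros :: "nat list \<Rightarrow> nat list" where
  "nonzeros [] = []"
| "nonzeros (x # v) = (if x = 0 then nonzeros v else x # nonzeros v)"

abbreviation first_nz :: "nat list \<Rightarrow> nat" where
  "first_nz v \<equiv> hd (nonzeros v)"

abbreviation last_nz :: "nat list \<Rightarrow> nat" where
  "last_nz v \<equiv> last (nonzeros v)"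

abbreviation blocks :: "nat list \<Rightarrow> nat" where
  "blocks v \<equiv> length (remdups_adj (nonzeros v))"

lemma nonzeros_append [simp]: "nonzeros (xs @ ys) = nonzeros xs @ nonzeros ys"
  by (induction xs) auto

lemma set_nonzeros [simp]: "set (nonzeros v) = set v - {0}"
  by (induction v) auto

lemma nonzeros_replicate_zero [simp]: "nonzeros (replicate n 0) = []"
  by (induction n) auto

lemma nonzeros_eq_Nil_iff: "nonzeros v = [] \<longleftrightarrow> set v \<subseteq> {0}"
  by (induction v) auto

lemma length_nonzeros_le: "length (nonzeros v) \<le> length v"
  by (induction v) auto

lemma first_nz_in_set: "nonzeros v \<noteq> [] \<Longrightarrow> first_nz v \<in> set v - {0}"
  using hd_in_set[of "nonzeros v"] by auto

lemma hd_mem_zero_first_nz: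
  assumes "nonzeros v \<noteq> []"
  shows "v \<noteq> []" "hd v \<in> {0, first_nz v}"
  using assms by (cases v; auto)+

lemma first_last_nz_of_subset:
  assumes "set v \<subseteq> {0, j}" "nonzeros v \<noteq> []"
  shows "first_nz v = j" "last_nz v = j"
  using hd_in_set[OF assms(2)] last_in_set[OF assms(2)] assms(1) by auto

lemma length_remdups_adj_append:
  "length (remdups_adj (xs @ ys)) + (if xs \<noteq> [] \<and> ys \<noteq> [] \<and> last xs = hd ys then 1 else 0)
     = length (remdups_adj xs) + length (remdups_adj ys)"
proof (cases "xs \<noteq> [] \<and> ys \<noteq> [] \<and> last xs = hd ys")
  case True
  then obtain y ys' where ys: "ys = y # ys'" and y: "last xs = y" by (cases ys) auto
  have "remdups_adj (xs @ ys) = remdups_adj xs @ remdups_adj (dropWhile (\<lambda>z. z = y) ys')"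
    using True ys y remdups_adj_append''[of xs ys] by simp
  moreover have "remdups_adj ys = y # remdups_adj (dropWhile (\<lambda>z. z = y) ys')"
    using ys remdups_adj_Cons' by simp
  ultimately show ?thesis using True by simp
next
  case False
  then show ?thesis by (subst remdups_adj_append') auto
qed

lemma blocks_append:
  "blocks (xs @ ys) + (if nonzeros xs \<noteq> [] \<and> nonzeros ys \<noteq> [] \<and> last_nz xs = first_nz ys then 1 else 0)
     = blocks xs + blocks ys"
  using length_remdups_adj_append[of "nonzeros xs" "nonzeros ys"] by simp

lemma blocks_append_le: "blocks (xs @ ys) \<le> blocks xs + blocks ys"
  using blocks_append[of xs ys] by linarith

lemma blocks_append_ge: "blocks xs + blocks ys \<le> Suc (blocks (xs @ ys))"
  using blocks_append[of xs ys] by (auto split: if_splits)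

lemma blocks_le_append: "blocks xs \<le> blocks (xs @ ys)"
proof (cases "nonzeros ys = []")
  case False
  then have "1 \<le> blocks ys" by simp
  then show ?thesis using blocks_append_ge[of xs ys] by linarith
qed simp

lemma blocks_le_length: "blocks xs \<le> length xs"
  using remdups_adj_length[of "nonzeros xs"] length_nonzeros_le[of xs] by linarith

lemma blocks_le_one_iff: "blocks xs \<le> 1 \<longleftrightarrow> (\<exists>i. set xs \<subseteq> {0, i})"
proof
  assume le: "blocks xs \<le> 1"
  show "\<exists>i. set xs \<subseteq> {0, i}"
  proof (cases "nonzeros xs = []")
    case True
    then have "set xs \<subseteq> {0, 0}" using nonzeros_eq_Nil_iff by auto
    then show ?thesis by blast
  next
    case False
    then have "blocks xs = Suc 0" using le remdups_adj_length_ge1[OF False] by linarith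
    then have "nonzeros xs = replicate (length (nonzeros xs)) (first_nz xs)"
      using remdups_adj_singleton_iff by blast
    then have "\<forall>x\<in>set (nonzeros xs). x = first_nz xs"
      by (metis in_set_replicate)
    then have "set xs \<subseteq> {0, first_nz xs}" by auto
    then show ?thesis by blast
  qed
next
  assume "\<exists>i. set xs \<subseteq> {0, i}"
  then obtain i where "set xs \<subseteq> {0, i}" by blast
  then have "nonzeros xs = replicate (length (nonzeros xs)) i"
    by (intro replicate_length_same[symmetric]) auto
  then have "remdups_adj (nonzeros xs) = (if length (nonzeros xs) = 0 then [] else [i])"
    by (metis remdups_adj_replicate)
  then show "blocks xs \<le> 1" by simp
qed

lemma blocks_eq_one:
  assumes "set xs \<subseteq> {0, i}" "nonzeros xs \<noteq> []"
  shows "blocks xs = 1"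
proof -
  have "blocks xs \<le> 1" using blocks_le_one_iff assms(1) by blast
  moreover have "1 \<le> blocks xs" using assms(2) by simp
  ultimately show ?thesis by simp
qed

section \<open>Orbits of the generators\<close>

lemma words_length: "v \<in> words p n \<Longrightarrow> length v = n"
  unfolding words_def by simp

lemma word_neq_zero_iff:
  assumes "v \<in> words p n"
  shows "v \<noteq> replicate n 0 \<longleftrightarrow> nonzeros v \<noteq> []"
proof -
  have "v = replicate (length v) 0 \<longleftrightarrow> nonzeros v = []" by (induction v) auto
  then show ?thesis using words_length[OF assms] by simp
qed

lemma finite_words: "finite (words p n)"
proof -
  have "words p n = {v. set v \<subseteq> {0..p} \<and> length v = n}" unfolding words_def by auto
  then show ?thesis using finite_lists_length_eq[of "{0..p}" n] by simp
qed

lemma first_nz_range: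
  assumes "u \<in> words p n" "nonzeros u \<noteq> []"
  shows "first_nz u \<in> {1..p}"
  using first_nz_in_set[OF assms(2)] assms(1) unfolding words_def by auto

fun run_len :: "nat \<Rightarrow> nat list \<Rightarrow> nat" where
  "run_len j [] = 0"
| "run_len j (x # v) = (if x = 0 \<or> x = j then Suc (run_len j v) else 0)"

fun orbit_rep :: "nat \<Rightarrow> nat list \<Rightarrow> nat list" where
  "orbit_rep j [] = []"
| "orbit_rep j (x # v) = (if x = 0 \<or> x = j then 0 # orbit_rep j v else x # v)"

lemma length_gen [simp]: "length (gen j v) = length v"
  by (induction v) auto

lemma length_orbit_rep [simp]: "length (orbit_rep j v) = length v"
  by (induction v) auto

lemma orbit_rep_gen [simp]: "orbit_rep j (gen j v) = orbit_rep j v"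
  by (induction v) auto

lemma orbit_rep_idem [simp]: "orbit_rep j (orbit_rep j v) = orbit_rep j v"
  by (induction v) auto

lemma run_len_orbit_rep [simp]: "run_len j (orbit_rep j v) = run_len j v"
  by (induction v) auto

lemma orbit_rep_replicate_zero [simp]: "orbit_rep j (replicate n 0) = replicate n 0"
  by (induction n) auto

lemma run_len_le_length: "run_len j v \<le> length v"
  by (induction v) auto

lemma run_len_eq_length_iff: "run_len j v = length v \<longleftrightarrow> set v \<subseteq> {0, j}"
  by (induction v) auto

lemma run_len_replicate_zero_append: "run_len j (replicate k 0 @ v) = k + run_len j v"
  by (induction k) auto

lemma orbit_rep_eq_replicate_iff: "orbit_rep j v = replicate (length v) 0 \<longleftrightarrow> set v \<subseteq> {0, j}"
  by (induction v) auto

lemma orbit_rep_eq_zero_iff: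
  "orbit_rep j u = replicate n 0 \<longleftrightarrow> length u = n \<and> set u \<subseteq> {0, j}"
proof
  assume rep: "orbit_rep j u = replicate n 0"
  then have "length u = n" using length_orbit_rep[of j u] by simp
  with rep show "length u = n \<and> set u \<subseteq> {0, j}" using orbit_rep_eq_replicate_iff[of j u] by simp
qed (use orbit_rep_eq_replicate_iff in auto)

lemma set_orbit_rep_diff: "set (orbit_rep j v) - {0, j} = set v - {0, j}"
  by (induction v) auto

lemma orbit_rep_eq_self: "nonzeros v \<noteq> [] \<Longrightarrow> first_nz v \<noteq> j \<Longrightarrow> orbit_rep j v = v"
proof (induction v)
  case (Cons x v)
  show ?case
  proof (cases "x = 0")
    case True
    with Cons show ?thesis by simp
  next
    case False
    with Cons.prems show ?thesis by simp
  qed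
qed simp

lemma orbit_rep_split:
  "\<not> set v \<subseteq> {0, j} \<Longrightarrow> \<exists>T y s. v = T @ y # s \<and> set T \<subseteq> {0, j} \<and> y \<notin> {0, j} \<and>
     orbit_rep j v = replicate (length T) 0 @ y # s \<and> run_len j v = length T"
proof (induction v)
  case (Cons x v)
  show ?case
  proof (cases "x = 0 \<or> x = j")
    case True
    with Cons obtain T y s where "v = T @ y # s" "set T \<subseteq> {0, j}" "y \<notin> {0, j}"
      "orbit_rep j v = replicate (length T) 0 @ y # s" "run_len j v = length T" by auto
    with True show ?thesis by (intro exI[of _ "x # T"]) auto
  next
    case False
    then show ?thesis by (intro exI[of _ "[]"]) auto
  qed
qed simp

lemma last_nz_orbit_rep: "\<not> set v \<subseteq> {0, j} \<Longrightarrow> last_nz (orbit_rep j v) = last_nz v"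
proof (induction v)
  case (Cons x v)
  then have "nonzeros v \<noteq> []" if "x = 0 \<or> x = j" using that nonzeros_eq_Nil_iff by auto
  with Cons show ?case by auto
qed simp

definition gen_edges :: "nat \<Rightarrow> (nat list \<times> nat list) set" where
  "gen_edges j = {(a, b). b = gen j a} \<union> {(a, b). b = gen j a}\<inverse>"

lemma orbit_gen_edges: "orbit j v = {u. (v, u) \<in> (gen_edges j)\<^sup>*}"
  unfolding orbit_def gen_edges_def by simp

lemma gen_edges_sym: "(a, b) \<in> (gen_edges j)\<^sup>* \<Longrightarrow> (b, a) \<in> (gen_edges j)\<^sup>*"
  by (metis gen_edges_def sym_Un_converse sym_rtrancl symD)

lemma gen_edges_gen: "(a, gen j a) \<in> (gen_edges j)\<^sup>*"
  unfolding gen_edges_def by auto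

lemma gen_edges_Cons:
  assumes "j \<noteq> 0" "c \<in> {0, j}" "(a, b) \<in> (gen_edges j)\<^sup>*"
  shows "(c # a, c # b) \<in> (gen_edges j)\<^sup>*"
  using assms(3)
proof (induction rule: rtrancl_induct)
  case (step y z)
  \<comment> \<open>Applying e_j twice to a word starting in {0, j} applies e_j once to its tail.\<close>
  have twice: "(c # x, c # gen j x) \<in> (gen_edges j)\<^sup>*" for x
  proof -
    have "gen j (gen j (c # x)) = c # gen j x" using assms(1,2) by auto
    then show ?thesis
      using rtrancl_trans[OF gen_edges_gen[of "c # x" j] gen_edges_gen[of "gen j (c # x)" j]] by simp
  qed
  from step.hyps(2) have "z = gen j y \<or> y = gen j z" unfolding gen_edges_def by auto
  then have "(c # y, c # z) \<in> (gen_edges j)\<^sup>*"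
    using twice gen_edges_sym by blast
  with step.IH show ?case by (rule rtrancl_trans)
qed simp

lemma orbit_rep_reachable: "j \<noteq> 0 \<Longrightarrow> (v, orbit_rep j v) \<in> (gen_edges j)\<^sup>*"
proof (induction v)
  case (Cons x v)
  show ?case
  proof (cases "x = 0 \<or> x = j")
    case True
    then have "(x # v, x # orbit_rep j v) \<in> (gen_edges j)\<^sup>*"
      using gen_edges_Cons Cons by simp
    moreover have "(x # orbit_rep j v, 0 # orbit_rep j v) \<in> (gen_edges j)\<^sup>*"
      using True gen_edges_gen[of "j # orbit_rep j v" j] Cons.prems by auto
    ultimately show ?thesis using True by (simp add: rtrancl_trans)
  qed simp
qed simp

lemma orbit_eq:
  assumes "j \<noteq> 0"
  shows "orbit j v = {u. orbit_rep j u = orbit_rep j v}"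
proof safe
  fix u assume "u \<in> orbit j v"
  then have "(v, u) \<in> (gen_edges j)\<^sup>*" by (simp add: orbit_gen_edges)
  then show "orbit_rep j u = orbit_rep j v"
    by (induction rule: rtrancl_induct) (auto simp: gen_edges_def)
next
  fix u assume rep: "orbit_rep j u = orbit_rep j v"
  have "(orbit_rep j v, u) \<in> (gen_edges j)\<^sup>*"
    using gen_edges_sym[OF orbit_rep_reachable[OF assms, of u]] rep by simp
  then show "u \<in> orbit j v"
    using rtrancl_trans[OF orbit_rep_reachable[OF assms, of v]] by (simp add: orbit_gen_edges)
qed

lemma run_len_orbit:
  assumes "j \<noteq> 0" "u \<in> orbit j v"
  shows "run_len j u = run_len j v"
proof -
  have "orbit_rep j u = orbit_rep j v" using assms orbit_eq by auto
  then show ?thesis using run_len_orbit_rep[of j u] run_len_orbit_rep[of j v] by simp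
qed

lemma orbit_Cset:
  assumes "i \<noteq> 0" "v \<in> Cset n i"
  shows "orbit i v = Cset n i"
proof -
  have "orbit_rep i v = replicate n 0" using assms(2) orbit_rep_eq_zero_iff unfolding Cset_def by simp
  then have "orbit i v = {u. orbit_rep i u = replicate n 0}" using orbit_eq[OF assms(1), of v] by simp
  also have "\<dots> = Cset n i" unfolding Cset_def using orbit_rep_eq_zero_iff by simp
  finally show ?thesis .
qed

lemma orbit_subset_words:
  assumes "j \<in> {1..p}" "v \<in> words p n"
  shows "orbit j v \<subseteq> words p n"
proof
  fix u assume "u \<in> orbit j v"
  then have rep: "orbit_rep j u = orbit_rep j v" using assms(1) orbit_eq by auto
  then have "length u = n" using words_length[OF assms(2)] by (metis length_orbit_rep)
  moreover have "set u - {0, j} = set v - {0, j}" using rep set_orbit_rep_diff by metis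
  then have "set u \<subseteq> {0..p}" using assms unfolding words_def by auto
  ultimately show "u \<in> words p n" unfolding words_def by simp
qed

lemma orbit_subset_nonzero_words:
  assumes "j \<in> {1..p}" "v \<in> words p n" "\<not> set v \<subseteq> {0, j}"
  shows "orbit j v \<subseteq> words p n - {replicate n 0}"
proof
  fix x assume x: "x \<in> orbit j v"
  have "orbit_rep j x = orbit_rep j v" using x orbit_eq[of j v] assms(1) by auto
  then have "set x - {0, j} = set v - {0, j}"
    using set_orbit_rep_diff[of j x] set_orbit_rep_diff[of j v] by simp
  then have "nonzeros x \<noteq> []" using assms(3) nonzeros_eq_Nil_iff[of x] by auto
  moreover have "x \<in> words p n" using x orbit_subset_words[OF assms(1,2)] by blast
  ultimately show "x \<in> words p n - {replicate n 0}" using word_neq_zero_iff by blast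
qed

lemma is_cycle_orbit:
  assumes "j \<in> {1..p}" "v \<in> words p n" "v \<noteq> []" "hd v \<in> {0, j}"
  shows "is_cycle p n j (orbit j v)"
proof -
  have "v \<in> orbit j v" "gen j v \<in> orbit j v" unfolding orbit_def by auto
  moreover have "gen j v \<noteq> v" using assms(1,3,4) by (cases v) auto
  moreover have "finite (orbit j v)"
    using finite_subset[OF orbit_subset_words[OF assms(1,2)] finite_words] .
  ultimately have "card {v, gen j v} \<le> card (orbit j v)" by (intro card_mono) auto
  then show ?thesis unfolding is_cycle_def using assms(1,2) \<open>gen j v \<noteq> v\<close> by auto
qed

lemma Badj_orbit:
  assumes "v \<in> words p n" "nonzeros v \<noteq> []" "x \<in> orbit (first_nz v) v"
  shows "Badj p n (Vert x) (Cyc (first_nz v) (orbit (first_nz v) v))"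
    and "Badj p n (Cyc (first_nz v) (orbit (first_nz v) v)) (Vert x)"
proof -
  let ?j = "first_nz v"
  have j: "?j \<in> {1..p}" using first_nz_range[OF assms(1,2)] .
  have "x \<in> words p n" using assms(3) orbit_subset_words[OF j assms(1)] by blast
  moreover have "is_cycle p n ?j (orbit ?j v)"
    using is_cycle_orbit[OF j assms(1) hd_mem_zero_first_nz[OF assms(2)]] .
  moreover have "orbit ?j x = orbit ?j v" using assms(3) orbit_eq j by auto
  ultimately show "Badj p n (Vert x) (Cyc ?j (orbit ?j v))"
    and "Badj p n (Cyc ?j (orbit ?j v)) (Vert x)"
    unfolding Badj_def using assms(3) by (auto simp: insert_commute)
qed

section \<open>Petals\<close>

lemma last_nz_gen:
  assumes "nonzeros a \<noteq> []" "nonzeros (gen j a) \<noteq> []"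
  shows "last_nz (gen j a) = last_nz a"
proof (cases "set a \<subseteq> {0, j}")
  case True
  then have "set (gen j a) \<subseteq> {0, j}"
    using orbit_rep_eq_replicate_iff[of j a] orbit_rep_eq_replicate_iff[of j "gen j a"] by simp
  then show ?thesis
    using first_last_nz_of_subset(2)[OF True assms(1)] first_last_nz_of_subset(2)[OF _ assms(2)]
    by simp
next
  case False
  then have "\<not> set (gen j a) \<subseteq> {0, j}"
    using orbit_rep_eq_replicate_iff[of j a] orbit_rep_eq_replicate_iff[of j "gen j a"] by simp
  then show ?thesis using last_nz_orbit_rep[OF False] last_nz_orbit_rep[of "gen j a" j] by simp
qed

lemma last_nz_Gedge: "(u, v) \<in> (Gedge_no0 p n)\<^sup>* \<Longrightarrow> last_nz v = last_nz u"
proof (induction rule: rtrancl_induct)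
  case (step y z)
  then have "nonzeros y \<noteq> []" "nonzeros z \<noteq> []" "\<exists>j. z = gen j y \<or> y = gen j z"
    unfolding Gedge_no0_def using word_neq_zero_iff by auto
  with step.IH show ?case using last_nz_gen[of y] last_nz_gen[of z] by auto
qed simp

lemma orbit_Gedge:
  assumes "j \<in> {1..p}" "orbit j v \<subseteq> words p n - {replicate n 0}" "u \<in> orbit j v"
  shows "(v, u) \<in> (Gedge_no0 p n)\<^sup>*"
proof -
  have "(v, u) \<in> (gen_edges j)\<^sup>*" using assms(3) orbit_gen_edges by auto
  then show ?thesis
  proof (induction rule: rtrancl_induct)
    case (step y z)
    then have "y \<in> orbit j v" "z \<in> orbit j v"
      unfolding orbit_gen_edges by (auto intro: rtrancl_into_rtrancl)
    moreover have "z = gen j y \<or> y = gen j z" using step.hyps(2) unfolding gen_edges_def by auto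
    ultimately have "(y, z) \<in> Gedge_no0 p n"
      using assms(1,2) unfolding Gedge_no0_def by blast
    with step.IH show ?case by simp
  qed simp
qed

definition first_run_len :: "nat list \<Rightarrow> nat" where
  "first_run_len u = run_len (first_nz u) u"

definition clear_first_block :: "nat list \<Rightarrow> nat list" where
  "clear_first_block u = orbit_rep (first_nz u) u"

lemma clear_first_block_orbit:
  assumes "nonzeros u \<noteq> []"
  shows "clear_first_block u \<in> orbit (first_nz u) u"
proof -
  have "first_nz u \<noteq> 0" using first_nz_in_set[OF assms] by simp
  then show ?thesis using orbit_eq[of "first_nz u" u] unfolding clear_first_block_def by simp
qed

lemma clear_first_block_step:
  assumes "nonzeros u \<noteq> []" "\<not> set u \<subseteq> {0, first_nz u}"
  shows "nonzeros (clear_first_block u) \<noteq> []"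
    and "blocks u = Suc (blocks (clear_first_block u))"
    and "first_run_len u < first_run_len (clear_first_block u)"
    and "last_nz (clear_first_block u) = last_nz u"
proof -
  let ?j = "first_nz u"
  obtain T y s where u: "u = T @ y # s" and T: "set T \<subseteq> {0, ?j}" and y: "y \<notin> {0, ?j}"
    and rep: "clear_first_block u = replicate (length T) 0 @ y # s"
    and run: "first_run_len u = length T"
    using orbit_rep_split[OF assms(2)] unfolding clear_first_block_def first_run_len_def by blast
  have T_nz: "nonzeros T \<noteq> []"
  proof
    assume "nonzeros T = []"
    then have "?j = y" using u y by simp
    then show False using y by simp
  qed
  show "nonzeros (clear_first_block u) \<noteq> []" using rep y by simp
  have "last_nz T \<noteq> y" using first_last_nz_of_subset(2)[OF T T_nz] y by simp
  then have "blocks u = Suc (blocks (y # s))"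
    using blocks_append[of T "y # s"] blocks_eq_one[OF T T_nz] u y by simp
  then show "blocks u = Suc (blocks (clear_first_block u))" using rep by simp
  have "first_nz (clear_first_block u) = y" using rep y by simp
  then show "first_run_len u < first_run_len (clear_first_block u)"
    using rep run run_len_replicate_zero_append unfolding first_run_len_def by simp
  show "last_nz (clear_first_block u) = last_nz u"
    using last_nz_orbit_rep[OF assms(2)] unfolding clear_first_block_def .
qed

lemma first_block_induct [consumes 1, case_names base step]:
  assumes "nonzeros u \<noteq> []"
    and "\<And>u. nonzeros u \<noteq> [] \<Longrightarrow> set u \<subseteq> {0, first_nz u} \<Longrightarrow> P u"
    and "\<And>u. nonzeros u \<noteq> [] \<Longrightarrow> \<not> set u \<subseteq> {0, first_nz u} \<Longrightarrow>
      P (clear_first_block u) \<Longrightarrow> P u"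
  shows "P u"
  using assms(1)
proof (induction "blocks u" arbitrary: u rule: less_induct)
  case less
  show ?case
  proof (cases "set u \<subseteq> {0, first_nz u}")
    case True
    with less.prems show ?thesis by (rule assms(2))
  next
    case False
    have "P (clear_first_block u)"
      using less.hyps[of "clear_first_block u"] clear_first_block_step[OF less.prems False] by simp
    with less.prems False show ?thesis by (rule assms(3))
  qed
qed

lemma in_petal_last_nz:
  assumes "nonzeros u \<noteq> []" "u \<in> words p n"
  shows "in_petal p n (last_nz u) u"
  using assms
proof (induction u rule: first_block_induct)
  case (base u)
  have "last_nz u = first_nz u" using first_last_nz_of_subset(2)[OF base(2,1)] .
  then have "u \<in> Cset n (last_nz u)" "last_nz u \<in> {1..p}"
    using base words_length[OF base(3)] first_nz_range[OF base(3,1)] unfolding Cset_def by auto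
  with base show ?case unfolding in_petal_def using word_neq_zero_iff by blast
next
  case (step u)
  let ?j = "first_nz u" and ?u' = "clear_first_block u"
  have j: "?j \<in> {1..p}" using first_nz_range[OF step(4,1)] .
  have orbit: "orbit ?j u \<subseteq> words p n - {replicate n 0}"
    using orbit_subset_nonzero_words[OF j step(4,2)] .
  have u': "?u' \<in> orbit ?j u" using clear_first_block_orbit[OF step(1)] .
  then have "in_petal p n (last_nz ?u') ?u'" using step(3) orbit by blast
  then obtain v where v: "v \<in> Cset n (last_nz u) - {replicate n 0}"
    "(?u', v) \<in> (Gedge_no0 p n)\<^sup>*" and i: "last_nz u \<in> {1..p}"
    unfolding in_petal_def clear_first_block_step(4)[OF step(1,2)] by auto
  have "(u, v) \<in> (Gedge_no0 p n)\<^sup>*" using rtrancl_trans[OF orbit_Gedge[OF j orbit u'] v(2)] .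
  then show ?case unfolding in_petal_def using step(1,4) v(1) i word_neq_zero_iff by blast
qed

lemma petal_index_eq_last_nz:
  assumes "u \<in> words p n" "nonzeros u \<noteq> []"
  shows "petal_index p n u = last_nz u"
  unfolding petal_index_def
proof (rule the_equality)
  show "in_petal p n (last_nz u) u" using in_petal_last_nz[OF assms(2,1)] .
next
  fix i assume "in_petal p n i u"
  then obtain v where v: "v \<in> Cset n i - {replicate n 0}" "(u, v) \<in> (Gedge_no0 p n)\<^sup>*"
    and "i \<in> {1..p}" unfolding in_petal_def by blast
  then have "v \<in> words p n" unfolding Cset_def words_def by auto
  then have "set v \<subseteq> {0, i}" "nonzeros v \<noteq> []"
    using v(1) word_neq_zero_iff unfolding Cset_def by auto
  then show "i = last_nz u" using first_last_nz_of_subset(2) last_nz_Gedge[OF v(2)] by simp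
qed

section \<open>Paths of cycles\<close>

lemma successively_parent:
  assumes adj: "\<And>a b. adj a b \<Longrightarrow> a = f b \<or> b = f a"
    and root: "\<And>a. adj a r \<Longrightarrow> f a = r"
  shows "successively adj xs \<Longrightarrow> distinct xs \<Longrightarrow> xs \<noteq> [] \<Longrightarrow> last xs = r
    \<Longrightarrow> successively (\<lambda>a b. b = f a) xs"
proof (induction xs rule: induct_list012)
  case (3 a b zs)
  then have IH: "successively (\<lambda>a b. b = f a) (b # zs)" by simp
  have "b = f a"
  proof (rule ccontr)
    assume "b \<noteq> f a"
    then have "a = f b" using adj 3(3) by auto
    show False
    proof (cases zs)
      case Nil
      then show False using root 3 \<open>b \<noteq> f a\<close> by auto
    next
      case (Cons c zs')
      then show False using IH \<open>a = f b\<close> 3(4) by auto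
    qed
  qed
  with IH show ?case by simp
qed simp_all

lemma parent_chain_unique:
  "successively (\<lambda>a b. b = f a) xs \<Longrightarrow> successively (\<lambda>a b. b = f a) ys \<Longrightarrow>
   distinct xs \<Longrightarrow> distinct ys \<Longrightarrow> xs \<noteq> [] \<Longrightarrow> ys \<noteq> [] \<Longrightarrow>
   hd xs = hd ys \<Longrightarrow> last xs = last ys \<Longrightarrow> xs = ys"
proof (induction xs arbitrary: ys)
  case (Cons a xs)
  then obtain ys' where ys: "ys = a # ys'" by (cases ys) auto
  consider "xs = []" "ys' = []" | "xs = []" "ys' \<noteq> []" | "xs \<noteq> []" "ys' = []" | "xs \<noteq> []" "ys' \<noteq> []"
    by blast
  then show ?case
  proof cases
    case 2
    then show ?thesis using Cons.prems ys last_in_set[of ys'] by auto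
  next
    case 3
    then show ?thesis using Cons.prems ys last_in_set[of xs] by auto
  next
    case 4
    then have "hd xs = hd ys'" using Cons.prems(1,2) ys by (cases xs; cases ys') auto
    then show ?thesis using Cons.IH[of ys'] Cons.prems ys 4 by (simp add: successively_Cons)
  qed (use ys in simp)
qed simp

text \<open>
  The parent links of B_n rooted at C^i_n; Cyc 0 {} is a dummy parent of the root, and all
  elements of a cycle S have the same orbit representative, so the choice in SOME is irrelevant.
\<close>

fun parent :: "nat \<Rightarrow> nat \<Rightarrow> node \<Rightarrow> node" where
  "parent n i (Vert v) =
     (if v = replicate n 0 then Cyc i (Cset n i) else Cyc (first_nz v) (orbit (first_nz v) v))"
| "parent n i (Cyc j S) =
     (if j = i \<and> S = Cset n i then Cyc 0 {} else Vert (orbit_rep j (SOME x. x \<in> S)))"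

lemma parent_cycle_or_vertex:
  assumes "i \<noteq> 0" "j \<noteq> 0" "v \<in> words p n"
  shows "parent n i (Vert v) = Cyc j (orbit j v) \<or> parent n i (Cyc j (orbit j v)) = Vert v"
proof -
  have "(SOME x. x \<in> orbit j v) \<in> orbit j v" by (rule someI[of _ v]) (simp add: orbit_def)
  then have some: "orbit_rep j (SOME x. x \<in> orbit j v) = orbit_rep j v"
    using orbit_eq[OF assms(2)] by simp
  consider "v = replicate n 0" | "nonzeros v \<noteq> []" "first_nz v = j" | "nonzeros v \<noteq> []" "first_nz v \<noteq> j"
    using word_neq_zero_iff[OF assms(3)] by blast
  then show ?thesis
  proof cases
    case 1
    then show ?thesis using some by auto
  next
    case 2
    then show ?thesis using word_neq_zero_iff[OF assms(3)] by auto
  next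
    case 3
    have "\<not> (j = i \<and> orbit j v = Cset n i)"
    proof
      assume "j = i \<and> orbit j v = Cset n i"
      then have "set v \<subseteq> {0, j}" unfolding Cset_def orbit_def by auto
      then show False using 3 first_last_nz_of_subset(1) by blast
    qed
    then have "parent n i (Cyc j (orbit j v)) = Vert v" using some orbit_rep_eq_self[OF 3] by simp
    then show ?thesis ..
  qed
qed

lemma Badj_parent:
  assumes "i \<noteq> 0" "Badj p n a b"
  shows "a = parent n i b \<or> b = parent n i a"
proof -
  obtain v j S where vjS: "{a, b} = {Vert v, Cyc j S}" "v \<in> words p n" "is_cycle p n j S" "v \<in> S"
    using assms(2) unfolding Badj_def by blast
  then obtain v' where "S = orbit j v'" "j \<noteq> 0" unfolding is_cycle_def by auto
  then have "S = orbit j v" using vjS(4) orbit_eq by auto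
  then show ?thesis
    using parent_cycle_or_vertex[OF assms(1) \<open>j \<noteq> 0\<close> vjS(2)] vjS(1)
    by (auto simp: doubleton_eq_iff)
qed

lemma Badj_root_parent:
  assumes "i \<noteq> 0" "Badj p n a (Cyc i (Cset n i))"
  shows "parent n i a = Cyc i (Cset n i)"
proof -
  have "a \<noteq> Cyc 0 {}" using assms(2) unfolding Badj_def is_cycle_def by (auto simp: doubleton_eq_iff)
  then show ?thesis using Badj_parent[OF assms] by auto
qed

lemma Bpath_unique:
  assumes "i \<noteq> 0" "Bpath p n u i ps" "Bpath p n u i qs"
  shows "ps = qs"
proof -
  have chain: "successively (\<lambda>a b. b = parent n i a) xs" if "Bpath p n u i xs" for xs
  proof -
    from that have "successively (Badj p n) xs" "distinct xs" "xs \<noteq> []" "last xs = Cyc i (Cset n i)"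
      unfolding Bpath_def by auto
    then show ?thesis
      using successively_parent[of "Badj p n" "parent n i" "Cyc i (Cset n i)"]
        Badj_parent[OF assms(1)] Badj_root_parent[OF assms(1)] by simp
  qed
  show ?thesis
    using parent_chain_unique[OF chain[OF assms(2)] chain[OF assms(3)]] assms(2,3)
    unfolding Bpath_def by simp
qed

text \<open>
  Along the path built below the level never decreases, and it increases strictly from each cycle
  to the next vertex; this is what makes the path distinct.
\<close>

fun node_level :: "node \<Rightarrow> nat" where
  "node_level (Vert v) = first_run_len v"
| "node_level (Cyc j S) = run_len j (SOME x. x \<in> S)"

lemma Bpath_exists_single_block:
  assumes "nonzeros u \<noteq> []" "set u \<subseteq> {0, first_nz u}" "u \<in> words p n"
  shows "\<exists>ps. Bpath p n u (last_nz u) ps \<and> length (filter is_Cyc ps) = blocks u \<and>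
    (\<forall>x\<in>set ps. first_run_len u \<le> node_level x)"
proof -
  let ?j = "first_nz u"
  have last: "last_nz u = ?j" using first_last_nz_of_subset(2)[OF assms(2,1)] .
  have C: "u \<in> Cset n ?j" using assms(2) words_length[OF assms(3)] unfolding Cset_def by simp
  then have orbit: "orbit ?j u = Cset n ?j" using orbit_Cset first_nz_range[OF assms(3,1)] by simp
  have "u \<in> orbit ?j u" unfolding orbit_def by simp
  then have "Badj p n (Vert u) (Cyc ?j (Cset n ?j))"
    using Badj_orbit(1)[OF assms(3,1)] orbit by simp
  then have path: "Bpath p n u (last_nz u) [Vert u, Cyc ?j (Cset n ?j)]"
    unfolding Bpath_def last by simp
  have "run_len ?j x = n" if "x \<in> Cset n ?j" for x
    using that run_len_eq_length_iff[of ?j x] unfolding Cset_def by simp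
  then have "node_level (Cyc ?j (Cset n ?j)) = n" using someI[of "\<lambda>x. x \<in> Cset n ?j", OF C] by simp
  moreover have "first_run_len u \<le> n"
    using run_len_le_length[of ?j u] words_length[OF assms(3)] unfolding first_run_len_def by simp
  ultimately show ?thesis
    using path blocks_eq_one[OF assms(2,1)] by (intro exI[of _ "[Vert u, Cyc ?j (Cset n ?j)]"]) auto
qed

lemma Bpath_exists:
  assumes "nonzeros u \<noteq> []" "u \<in> words p n"
  shows "\<exists>ps. Bpath p n u (last_nz u) ps \<and> length (filter is_Cyc ps) = blocks u \<and>
    (\<forall>x\<in>set ps. first_run_len u \<le> node_level x)"
  using assms
proof (induction u rule: first_block_induct)
  case (base u)
  then show ?case by (rule Bpath_exists_single_block)
next
  case (step u)
  let ?j = "first_nz u" and ?u' = "clear_first_block u"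
  let ?O = "orbit ?j u"
  note clear = clear_first_block_step[OF step(1,2)]
  have u': "?u' \<in> ?O" using clear_first_block_orbit[OF step(1)] .
  have "?u' \<in> words p n" using u' orbit_subset_words[OF first_nz_range[OF step(4,1)] step(4)] by blast
  then obtain ps' where ps': "Bpath p n ?u' (last_nz u) ps'" "length (filter is_Cyc ps') = blocks ?u'"
    "\<forall>x\<in>set ps'. first_run_len ?u' \<le> node_level x"
    using step(3) clear(4) by auto
  have "u \<in> ?O" unfolding orbit_def by simp
  then have "(SOME x. x \<in> ?O) \<in> ?O" by (rule someI)
  then have level: "node_level (Cyc ?j ?O) = first_run_len u"
    using run_len_orbit first_nz_in_set[OF step(1)] unfolding first_run_len_def by simp
  have "Vert u \<notin> set ps'" "Cyc ?j ?O \<notin> set ps'"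
    using ps'(3) clear(3) level by fastforce+
  then have "Bpath p n u (last_nz u) (Vert u # Cyc ?j ?O # ps')"
    using ps'(1) Badj_orbit[OF step(4,1) \<open>u \<in> ?O\<close>] Badj_orbit(2)[OF step(4,1) u']
    unfolding Bpath_def by (auto simp: successively_Cons)
  moreover have "\<forall>x\<in>set (Vert u # Cyc ?j ?O # ps'). first_run_len u \<le> node_level x"
    using ps'(3) clear(3) level by fastforce
  ultimately show ?case
    using ps'(2) clear(2) by (intro exI[of _ "Vert u # Cyc ?j ?O # ps'"]) simp
qed

lemma path_cycles_eq_blocks:
  assumes "u \<in> words p n" "nonzeros u \<noteq> []"
  shows "path_cycles p n u = blocks u"
proof -
  obtain ps where ps: "Bpath p n u (last_nz u) ps" "length (filter is_Cyc ps) = blocks u"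
    using Bpath_exists[OF assms(2,1)] by blast
  have "last_nz u \<noteq> 0" using last_in_set[OF assms(2)] by simp
  then have "(THE ps. Bpath p n u (last_nz u) ps) = ps"
    using ps(1) Bpath_unique by blast
  then show ?thesis
    unfolding path_cycles_def petal_index_eq_last_nz[OF assms] using ps(2) by simp
qed

section \<open>Prefixes of an infinite word\<close>

lemma pref_words: "\<forall>k. w k \<le> p \<Longrightarrow> pref w n \<in> words p n"
  unfolding words_def pref_def by auto

lemma pref_append: "m \<le> n \<Longrightarrow> pref w n = pref w m @ map w [m..<n]"
  unfolding pref_def by (metis le_add_diff_inverse map_append upt_add_eq_append zero_le)

lemma nonzeros_pref_mono: "nonzeros (pref w m) \<noteq> [] \<Longrightarrow> m \<le> n \<Longrightarrow> nonzeros (pref w n) \<noteq> []"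
  using pref_append[of m n w] by auto

lemma mono_blocks_pref: "mono (\<lambda>n. blocks (pref w n))"
  by (rule monoI) (use pref_append blocks_le_append in metis)

lemma eventually_path_cycles_pref_eq_blocks:
  assumes "\<forall>k. w k \<le> p" "w k \<noteq> 0"
  shows "\<forall>\<^sub>F n in sequentially. path_cycles p n (pref w n) = blocks (pref w n)"
proof (rule eventually_sequentiallyI)
  fix n assume "Suc k \<le> n"
  moreover have "nonzeros (pref w (Suc k)) \<noteq> []" using assms(2) by (simp add: pref_def)
  ultimately have "nonzeros (pref w n) \<noteq> []" using nonzeros_pref_mono by blast
  then show "path_cycles p n (pref w n) = blocks (pref w n)"
    using path_cycles_eq_blocks[OF pref_words[OF assms(1)]] by blast
qed

lemma convergent_real_iff_bdd_above:
  fixes f :: "nat \<Rightarrow> nat"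
  assumes "mono f"
  shows "convergent (\<lambda>n. real (f n)) \<longleftrightarrow> bdd_above (range f)"
proof
  assume "convergent (\<lambda>n. real (f n))"
  then obtain B where B: "\<forall>n. real (f n) \<le> B"
    using Bseq_bdd_above[OF convergent_imp_Bseq] by (auto simp: bdd_above_def)
  have "f n \<le> nat \<lceil>B\<rceil>" for n using B[rule_format, of n] by linarith
  then show "bdd_above (range f)" unfolding bdd_above_def by blast
next
  assume "bdd_above (range f)"
  then obtain B where "\<forall>n. f n \<le> B" by (auto simp: bdd_above_def)
  then have "Bseq (\<lambda>n. real (f n))" by (intro BseqI'[of _ "real B"]) auto
  moreover have "monoseq (\<lambda>n. real (f n))" using assms unfolding monoseq_def mono_def by auto
  ultimately show "convergent (\<lambda>n. real (f n))" by (rule Bseq_monoseq_convergent)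
qed

lemma mono_bdd_above_eventually_const:
  fixes f :: "nat \<Rightarrow> nat"
  assumes "mono f" "bdd_above (range f)"
  obtains K where "\<And>n. K \<le> n \<Longrightarrow> f n = f K"
proof -
  have fin: "finite (range f)" using assms(2) bdd_above_nat by blast
  obtain K where K: "f K = Max (range f)" using Max_in[OF fin] by (metis imageE UNIV_not_empty image_is_empty)
  have "f n = f K" if "K \<le> n" for n
    using monoD[OF assms(1) that] K Max_ge[OF fin, of "f n"] by simp
  then show ?thesis using that by blast
qed

lemma cofinal_imp_bdd_above_blocks:
  assumes "\<forall>k. v k \<in> {0, i}" "finite {k. w k \<noteq> v k}"
  shows "bdd_above (range (\<lambda>n. blocks (pref w n)))"
proof -
  obtain K where "\<forall>k\<in>{k. w k \<noteq> v k}. k < K"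
    using assms(2) finite_nat_set_iff_bounded by blast
  then have K: "\<forall>k\<ge>K. w k \<in> {0, i}" using assms(1) by force
  have "blocks (pref w n) \<le> K + 1" for n
  proof -
    have "blocks (pref w n) \<le> blocks (pref w (max K n))"
      using monoD[OF mono_blocks_pref] by simp
    also have "\<dots> \<le> blocks (pref w K) + blocks (map w [K..<max K n])"
      using pref_append[of K "max K n" w] blocks_append_le by simp
    also have "\<dots> \<le> K + 1"
    proof -
      have "set (map w [K..<max K n]) \<subseteq> {0, i}" using K by (auto simp: image_subset_iff)
      then have "blocks (map w [K..<max K n]) \<le> 1" using blocks_le_one_iff by blast
      moreover have "blocks (pref w K) \<le> K" using blocks_le_length[of "pref w K"] by (simp add: pref_def)
      ultimately show ?thesis by simp
    qed
    finally show ?thesis .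
  qed
  then show ?thesis unfolding bdd_above_def by blast
qed

lemma bdd_above_blocks_imp_cofinal:
  assumes "\<forall>k. w k \<le> p" "bdd_above (range (\<lambda>n. blocks (pref w n)))"
  shows "\<exists>i\<le>p. \<exists>v. (\<forall>k. v k \<in> {0, i}) \<and> finite {k. w k \<noteq> v k}"
proof -
  obtain K where K: "\<And>n. K \<le> n \<Longrightarrow> blocks (pref w n) = blocks (pref w K)"
    using mono_bdd_above_eventually_const[OF mono_blocks_pref assms(2)] by blast
  \<comment> \<open>Once the number of blocks is constant, no window after K contains two distinct nonzero letters.\<close>
  have same: "w k = w k'" if "K \<le> k" "K \<le> k'" "w k \<noteq> 0" "w k' \<noteq> 0" for k k'
  proof -
    let ?n = "Suc (max k k')"
    have "blocks (pref w K) + blocks (map w [K..<?n]) \<le> Suc (blocks (pref w ?n))"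
      using pref_append[of K ?n w] blocks_append_ge that by simp
    then have "blocks (map w [K..<?n]) \<le> 1" using K[of ?n] that by simp
    then obtain i where "set (map w [K..<?n]) \<subseteq> {0, i}" using blocks_le_one_iff by blast
    then have "\<forall>x\<in>set [K..<?n]. w x \<in> {0, i}" by (simp only: set_map image_subset_iff)
    moreover have "k \<in> set [K..<?n]" "k' \<in> set [K..<?n]" using that by auto
    ultimately have "w k \<in> {0, i}" "w k' \<in> {0, i}" by blast+
    then show ?thesis using that by auto
  qed
  obtain i where i: "i \<le> p" "\<forall>k\<ge>K. w k \<in> {0, i}"
  proof (cases "\<exists>k\<ge>K. w k \<noteq> 0")
    case True
    then obtain k where "K \<le> k" "w k \<noteq> 0" by blast
    then show ?thesis using that[of "w k"] same assms(1) by blast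
  qed (use that in auto)
  define v where "v k = (if k < K then 0 else w k)" for k
  have "\<forall>k. v k \<in> {0, i}" unfolding v_def using i(2) by auto
  moreover have "finite {k. w k \<noteq> v k}" by (rule finite_subset[of _ "{..<K}"]) (auto simp: v_def)
  ultimately show ?thesis using i(1) by blast
qed

lemma bdd_above_blocks_pref_iff_cofinal:
  assumes "\<forall>k. w k \<le> p"
  shows "bdd_above (range (\<lambda>n. blocks (pref w n))) \<longleftrightarrow>
    (\<exists>i\<le>p. \<exists>v. (\<forall>k. v k \<in> {0, i}) \<and> finite {k. w k \<noteq> v k})"
  using cofinal_imp_bdd_above_blocks bdd_above_blocks_imp_cofinal[OF assms] by (metis (no_types))

theorem proposition4p12:
  fixes p :: nat and w :: "nat \<Rightarrow> nat"
  assumes "p \<ge> 1" and "\<forall>k. w k \<le> p" and "\<exists>k. w k \<noteq> 0"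
  shows "(\<forall>n\<ge>1. pref w n \<noteq> replicate n 0 \<longrightarrow>
            path_cycles p n (pref w n) \<le> path_cycles p (n + 1) (pref w (n + 1)))
         \<and> ((\<exists>L. (\<lambda>n. real (path_cycles p n (pref w n))) \<longlonglongrightarrow> L) \<longleftrightarrow>
            (\<exists>i\<le>p. \<exists>v :: nat \<Rightarrow> nat. (\<forall>k. v k \<in> {0, i}) \<and> finite {k. w k \<noteq> v k}))"
proof -
  note words = pref_words[OF assms(2)]
  have mono: "path_cycles p n (pref w n) \<le> path_cycles p (n + 1) (pref w (n + 1))"
    if "pref w n \<noteq> replicate n 0" for n
  proof -
    have nz: "nonzeros (pref w n) \<noteq> []" using that word_neq_zero_iff[OF words] by blast
    then show ?thesis
      using path_cycles_eq_blocks[OF words nz] path_cycles_eq_blocks[OF words nonzeros_pref_mono[OF nz]]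
        monoD[OF mono_blocks_pref, of n "n + 1"] by simp
  qed
  obtain k where "w k \<noteq> 0" using assms(3) by blast
  then have "\<forall>\<^sub>F n in sequentially. real (path_cycles p n (pref w n)) = real (blocks (pref w n))"
    using eventually_path_cycles_pref_eq_blocks[OF assms(2)] by (auto elim: eventually_mono)
  then have "convergent (\<lambda>n. real (path_cycles p n (pref w n))) \<longleftrightarrow>
      convergent (\<lambda>n. real (blocks (pref w n)))"
    unfolding convergent_def by (simp only: tendsto_cong)
  also have "\<dots> \<longleftrightarrow> (\<exists>i\<le>p. \<exists>v. (\<forall>k. v k \<in> {0, i}) \<and> finite {k. w k \<noteq> v k})"
    using convergent_real_iff_bdd_above[OF mono_blocks_pref] bdd_above_blocks_pref_iff_cofinal[OF assms(2)]
    by simp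
  finally show ?thesis unfolding convergent_def using mono by simp
qed

end
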